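(* The size $g_{is}$ of the GCIS grammar satisfies: substitutions: $\liminf_{n\to\infty}\mathsf{MS}_{\mathrm{sub}}(g_{is},n)\ge 4$ and $\mathsf{AS}_{\mathrm{sub}}(g_{is},n)\ge 3g_{is}-13=\Omega(n)$; insertions: $\liminf_{n\to\infty}\mathsf{MS}_{\mathrm{ins}}(g_{is},n)\ge 4$ and $\mathsf{AS}_{\mathrm{ins}}(g_{is},n)\ge 3g_{is}-24=\Omega(n)$; deletions: $\liminf_{n\to\infty}\mathsf{MS}_{\mathrm{del}}(g_{is},n)\ge 4$ and $\mathsf{AS}_{\mathrm{del}}(g_{is},n)\ge 3g_{is}-29=\Omega(n)$.
   Context: Strings are over an integer (ordered) alphabet $\Sigma=\{1,\ldots,\sigma\}$ (with enough characters, e.g. $\{0,1,2,3\}$); $\mathsf{ed}$ is the edit distance. $\mathsf{MS}_{\mathrm{sub}}(C,n)=\max_{T\in\Sigma^n}\{C(T')/C(T): T'\in\Sigma^n,\ \mathsf{ed}(T,T')=1\}$, with $\mathsf{MS}_{\mathrm{ins}},\mathsf{MS}_{\mathrm{del}}$ analogous for $T'$ of length $n+1$, resp. $n-1$, and $\mathsf{AS}_\ast$ analogous with $C(T')-C(T)$. A bound "$\mathsf{AS}\ge 3g_{is}-c$" means there exist strings $T$ (with $g_{is}(T)$ arbitrarily large) and $T'$ obtained by one edit of that type with $g_{is}(T')-g_{is}(T)\ge 3g_{is}(T)-c$. GCIS: for a string $G$ (to which a unique smallest end-marker $\$$ is appended), position $i$ is of type L if the suffix $G[i..]$ is lexicographically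 larger than $G[i+1..]$, and of type S otherwise; position $i$ is an LMS position if it is of type S and $i-1$ is of type L; positions $1$ and $|G\$|$ are also treated as LMS positions. If $i_1<\cdots<i_{z+1}$ are the LMS positions, the GCIS-parsing of $G$ is $G=D_1\cdots D_z$ with $D_j=G[i_j..i_{j+1}-1]$. Each factor $D_j$ is replaced by a fresh nonterminal $R_j$, where equal factors receive equal nonterminals and nonterminals are assigned in the lexicographic order of the factors, using integers larger than all previously used symbols; $R_1\cdots R_z$ is the GCIS-string of $G$, and $\mathcal{D}(G)=\{D_1,\ldots,D_z\}$ is the set of distinct factors. Let $G_0=T$ and $G_{k+1}$ be the GCIS-string of $G_k$, with $\mathcal{D}_{k+1}=\mathcal{D}(G_k)$; the process stops at the first $k=r$ such that $G_r[2..|G_r|]$ contains no LMS position. The GCIS grammar size is $g_{is}(T)=|T|$ if $r=0$, and $g_{is}(T)=\|\mathcal{D}_1\|+\cdots+\|\mathcal{D}_r\|+|G_r|$ if $r\ge1$, where $\|\mathcal{S}\|$ is the total length of the strings in a set $\mathcal{S}$. *)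

theory Defs
  imports "HOL-Analysis.Analysis"
begin

fun ed :: "'a list \<Rightarrow> 'a list \<Rightarrow> nat" where
  "ed [] ys = length ys"
| "ed (x # xs) [] = Suc (length xs)"
| "ed (x # xs) (y # ys) =
     min (min (Suc (ed xs (y # ys))) (Suc (ed (x # xs) ys)))
         (ed xs ys + (if x = y then 0 else 1))"

definition strings :: "nat \<Rightarrow> nat \<Rightarrow> nat list set" where
  "strings \<sigma> n = {T. length T = n \<and> set T \<subseteq> {1..\<sigma>}}"

definition lex_less :: "nat list \<Rightarrow> nat list \<Rightarrow> bool" where
  "lex_less u v \<longleftrightarrow> (u, v) \<in> lexord {(a, b). a < b}"

text \<open>The string G with the unique smallest end-marker appended: every symbol of G
  is shifted by one and the end-marker is 0.\<close>
definition with_end :: "nat list \<Rightarrow> nat list" where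
  "with_end G = map Suc G @ [0]"

text \<open>Positions are 0-based here: position i (i < length G) of G is the paper's
  position i+1; position length G is the end-marker.\<close>
definition typeL :: "nat list \<Rightarrow> nat \<Rightarrow> bool" where
  "typeL G i \<longleftrightarrow> i < length G \<and>
     lex_less (drop (Suc i) (with_end G)) (drop i (with_end G))"

definition typeS :: "nat list \<Rightarrow> nat \<Rightarrow> bool" where
  "typeS G i \<longleftrightarrow> i \<le> length G \<and> \<not> typeL G i"

definition LMS :: "nat list \<Rightarrow> nat set" where
  "LMS G = {0, length G} \<union> {i. 0 < i \<and> i \<le> length G \<and> typeS G i \<and> typeL G (i - 1)}"

definition lms_list :: "nat list \<Rightarrow> nat list" where
  "lms_list G = sorted_list_of_set (LMS G)"

definition factors :: "nat list \<Rightarrow> nat list list" where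
  "factors G = (let p = lms_list G in
     map (\<lambda>j. take (p ! Suc j - p ! j) (drop (p ! j) G)) [0..<length p - 1])"

definition Dset :: "nat list \<Rightarrow> nat list set" where
  "Dset G = set (factors G)"

definition Dsize :: "nat list \<Rightarrow> nat" where
  "Dsize G = (\<Sum>D\<in>Dset G. length D)"

text \<open>Nonterminal of a factor: fresh integers larger than all previously used symbols
  (the largest previously used symbol is the maximum symbol of G), assigned in the
  lexicographic order of the distinct factors.\<close>
definition nonterm :: "nat list \<Rightarrow> nat list \<Rightarrow> nat" where
  "nonterm G D = Max (insert 0 (set G)) + 1 + card {D' \<in> Dset G. lex_less D' D}"

definition gcis_string :: "nat list \<Rightarrow> nat list" where
  "gcis_string G = map (nonterm G) (factors G)"

definition Gk :: "nat list \<Rightarrow> nat \<Rightarrow> nat list" where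
  "Gk T k = (gcis_string ^^ k) T"

text \<open>Stop when G[2..|G|] (1-based) contains no LMS position, i.e. no LMS position in
  the 0-based range 1 .. length G - 1.\<close>
definition stops :: "nat list \<Rightarrow> bool" where
  "stops G \<longleftrightarrow> (\<forall>i\<in>LMS G. i = 0 \<or> length G \<le> i)"

definition gcis_r :: "nat list \<Rightarrow> nat" where
  "gcis_r T = (LEAST k. stops (Gk T k))"

definition g_is :: "nat list \<Rightarrow> nat" where
  "g_is T = (let r = gcis_r T in
     if r = 0 then length T else (\<Sum>k<r. Dsize (Gk T k)) + length (Gk T r))"

definition MS_sub :: "nat \<Rightarrow> (nat list \<Rightarrow> nat) \<Rightarrow> nat \<Rightarrow> real" where
  "MS_sub \<sigma> C n = Max {real (C T') / real (C T) | T T'.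
      T \<in> strings \<sigma> n \<and> T' \<in> strings \<sigma> n \<and> ed T T' = 1}"

definition MS_ins :: "nat \<Rightarrow> (nat list \<Rightarrow> nat) \<Rightarrow> nat \<Rightarrow> real" where
  "MS_ins \<sigma> C n = Max {real (C T') / real (C T) | T T'.
      T \<in> strings \<sigma> n \<and> T' \<in> strings \<sigma> (n + 1) \<and> ed T T' = 1}"

definition MS_del :: "nat \<Rightarrow> (nat list \<Rightarrow> nat) \<Rightarrow> nat \<Rightarrow> real" where
  "MS_del \<sigma> C n = Max {real (C T') / real (C T) | T T'.
      T \<in> strings \<sigma> n \<and> T' \<in> strings \<sigma> (n - 1) \<and> ed T T' = 1}"

end

theory Submission
  imports Defs
begin

(*
  Each witness consists of four copies of one block, so GCIS parses it into equal factors and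
  the grammar stores the block only once. For TA k = (2^(k+1) 3)^4 this gives g_is = k + 6.
  Replacing the 3 of the second copy by 1 makes that 1 an LMS position and removes the LMS
  position at the start of the third copy; the parsing then has the three distinct factors
  2^(k+1) 3 2^(k+1), 1 2^(k+1) 3 and 2^(k+1) 3 of total length 4k + 8, and g_is = 4k + 13.

  For insertions and deletions the same happens one level higher: the blocks (12)^(k+1) 13 of
  TB k are parsed into the factors 12 and 13, so the first GCIS-string is (4^(k+1) 5)^4, and an
  edit at the 3 of the second block changes only a constant number of its symbols. Prefixing a
  run of t + 1 <= 8 threes changes g_is only by a constant but realises every length n >= 17,
  which yields g_is T' / g_is T >= 4 - 408 / n for all such n.
*)

section \<open>L/S types and LMS positions\<close>

lemma lex_less_Cons: "lex_less (a # xs) (b # ys) \<longleftrightarrow> a < b \<or> (a = b \<and> lex_less xs ys)"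
  unfolding lex_less_def by auto

lemma lex_less_Nil_left [simp]: "lex_less [] ys \<longleftrightarrow> ys \<noteq> []"
  unfolding lex_less_def by (cases ys) auto

lemma lex_less_Nil_right [simp]: "\<not> lex_less xs []"
  unfolding lex_less_def by auto

lemma lex_less_irrefl [simp]: "\<not> lex_less xs xs"
  by (induction xs) (auto simp: lex_less_Cons)

lemma lex_less_append_left [simp]: "lex_less (xs @ ys) (xs @ zs) \<longleftrightarrow> lex_less ys zs"
  by (induction xs) (auto simp: lex_less_Cons)

fun ltypes :: "nat list \<Rightarrow> bool list" where
  "ltypes [] = []"
| "ltypes [a] = [True]"
| "ltypes (a # b # r) = (b < a \<or> (a = b \<and> hd (ltypes (b # r)))) # ltypes (b # r)"

lemma length_ltypes [simp]: "length (ltypes G) = length G"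
  by (induction G rule: ltypes.induct) auto

lemma ltypes_last: "G \<noteq> [] \<Longrightarrow> ltypes G ! (length G - 1)"
  by (induction G rule: ltypes.induct) (auto simp: nth_Cons')

lemma typeL_Cons_Suc: "typeL (a # r) (Suc i) = typeL r i"
  unfolding typeL_def with_end_def by simp

lemma typeL_Cons_0: "typeL (a # r) 0 = hd (ltypes (a # r))"
proof (induction r arbitrary: a)
  case Nil
  then show ?case unfolding typeL_def with_end_def by (simp add: lex_less_Cons)
next
  case (Cons b r)
  have "typeL (a # b # r) 0 \<longleftrightarrow> lex_less (Suc b # with_end r) (Suc a # Suc b # with_end r)"
    unfolding typeL_def with_end_def by simp
  also have "\<dots> \<longleftrightarrow> b < a \<or> (a = b \<and> lex_less (with_end r) (Suc b # with_end r))"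
    by (auto simp add: lex_less_Cons)
  also have "lex_less (with_end r) (Suc b # with_end r) = typeL (b # r) 0"
    unfolding typeL_def with_end_def by simp
  finally show ?case using Cons by simp
qed

lemma typeL_eq_ltypes: "i < length G \<Longrightarrow> typeL G i = ltypes G ! i"
proof (induction G arbitrary: i)
  case Nil
  then show ?case by simp
next
  case (Cons a r)
  then show ?case
    by (cases i; cases r) (simp_all add: typeL_Cons_0 typeL_Cons_Suc)
qed

definition LMS_inner :: "nat list \<Rightarrow> nat set" where
  "LMS_inner G = {i. 0 < i \<and> i < length G \<and> ltypes G ! (i - 1) \<and> \<not> ltypes G ! i}"

lemma finite_LMS_inner: "finite (LMS_inner G)"
  unfolding LMS_inner_def by auto

lemma LMS_eq: "LMS G = {0, length G} \<union> LMS_inner G"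
  unfolding LMS_def LMS_inner_def typeS_def by (auto simp: typeL_eq_ltypes)

lemma LMS_inner_subset: "LMS_inner G \<subseteq> {1..<length G - 1}"
proof
  fix i assume i: "i \<in> LMS_inner G"
  then have "i \<noteq> length G - 1" using ltypes_last[of G] unfolding LMS_inner_def by force
  with i show "i \<in> {1..<length G - 1}" unfolding LMS_inner_def by auto
qed

section \<open>The GCIS-parsing as a scan\<close>

text \<open>A left-to-right scan over the symbols paired with their types (True for L): the flag
  records whether the previous position is of type L, the list is the factor read so far, and
  a new factor starts at every S-position following an L-position.\<close>

fun scan_factors :: "bool \<Rightarrow> nat list \<Rightarrow> (nat \<times> bool) list \<Rightarrow> nat list list" where
  "scan_factors p cur [] = (if cur = [] then [] else [cur])"
| "scan_factors p cur ((a, t) # r) =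
     (if p \<and> \<not> t then cur # scan_factors t [a] r else scan_factors t (cur @ [a]) r)"

fun factor_starts :: "nat list list \<Rightarrow> nat list" where
  "factor_starts [] = [0]"
| "factor_starts (F # Fs) = 0 # map ((+) (length F)) (factor_starts Fs)"

definition LS_positions :: "bool \<Rightarrow> (nat \<times> bool) list \<Rightarrow> nat set" where
  "LS_positions p xs =
     {i. i < length xs \<and> (if i = 0 then p else snd (xs ! (i - 1))) \<and> \<not> snd (xs ! i)}"

lemma LS_positions_Nil: "LS_positions p [] = {}"
  unfolding LS_positions_def by auto

lemma LS_positions_Cons:
  "LS_positions p ((a, t) # r) = (if p \<and> \<not> t then {0} else {}) \<union> Suc ` LS_positions t r"
proof -
  have "i \<in> LS_positions p ((a, t) # r) \<longleftrightarrow>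
        i \<in> (if p \<and> \<not> t then {0} else {}) \<union> Suc ` LS_positions t r" for i
    unfolding LS_positions_def by (cases i; cases "i - 1") (auto simp: nth_Cons')
  then show ?thesis by blast
qed

lemma scan_factors_correct:
  "(cur = [] \<longrightarrow> \<not> p) \<Longrightarrow>
    (\<forall>F\<in>set (scan_factors p cur xs). F \<noteq> []) \<and>
    concat (scan_factors p cur xs) = cur @ map fst xs \<and>
    set (factor_starts (scan_factors p cur xs)) =
      {0, length cur + length xs} \<union> (+) (length cur) ` LS_positions p xs"
proof (induction xs arbitrary: p cur)
  case Nil
  then show ?case by (auto simp: LS_positions_Nil)
next
  case (Cons x r)
  obtain a t where x: "x = (a, t)" by (cases x)
  show ?case
  proof (cases "p \<and> \<not> t")
    case True
    then show ?thesis using Cons.prems Cons.IH[of "[a]" t]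
      unfolding x by (auto simp: LS_positions_Cons image_image)
  next
    case False
    then show ?thesis using Cons.IH[of "cur @ [a]" t]
      unfolding x by (auto simp: LS_positions_Cons image_image)
  qed
qed

lemma length_factor_starts [simp]: "length (factor_starts Fs) = Suc (length Fs)"
  by (induction Fs) auto

lemma nth_factor_starts: "j \<le> length Fs \<Longrightarrow> factor_starts Fs ! j = length (concat (take j Fs))"
proof (induction Fs arbitrary: j)
  case (Cons F Fs)
  then show ?case by (cases j) auto
qed simp

lemma sorted_factor_starts: "\<forall>F\<in>set Fs. F \<noteq> [] \<Longrightarrow> sorted_wrt (<) (factor_starts Fs)"
  by (induction Fs) (auto simp: sorted_wrt_map)

lemma factors_eqI:
  assumes ne: "\<forall>F\<in>set Fs. F \<noteq> []" and concat: "concat Fs = G"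
    and starts: "LMS G = set (factor_starts Fs)"
  shows "factors G = Fs"
proof -
  have lms: "lms_list G = factor_starts Fs"
    unfolding lms_list_def starts using sorted_factor_starts[OF ne]
    by (simp add: sorted_list_of_set.idem_if_sorted_distinct strict_sorted_iff)
  show ?thesis
  proof (rule nth_equalityI)
    show "length (factors G) = length Fs"
      unfolding factors_def lms Let_def by simp
    fix j assume "j < length (factors G)"
    then have j: "j < length Fs" unfolding factors_def lms Let_def by simp
    have "G = concat (take j Fs) @ Fs ! j @ concat (drop (Suc j) Fs)"
      using concat j by (metis append_take_drop_id concat_append Cons_nth_drop_Suc concat.simps(2))
    then have "drop (length (concat (take j Fs))) G = Fs ! j @ concat (drop (Suc j) Fs)"
      by (metis append_eq_conv_conj)
    moreover have "length (concat (take (Suc j) Fs)) - length (concat (take j Fs)) = length (Fs ! j)"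
      using j by (simp add: take_Suc_conv_app_nth)
    ultimately show "factors G ! j = Fs ! j"
      unfolding factors_def lms Let_def using j by (simp add: nth_factor_starts del: take_Suc)
  qed
qed

lemma factors_eq_scan_factors: "factors G = scan_factors False [] (zip G (ltypes G))"
proof (rule factors_eqI)
  have "LS_positions False (zip G (ltypes G)) = LMS_inner G"
    unfolding LS_positions_def LMS_inner_def by auto
  then show "(\<forall>F\<in>set (scan_factors False [] (zip G (ltypes G))). F \<noteq> [])"
    "concat (scan_factors False [] (zip G (ltypes G))) = G"
    "LMS G = set (factor_starts (scan_factors False [] (zip G (ltypes G))))"
    using scan_factors_correct[of "[]" False "zip G (ltypes G)"] by (auto simp: LMS_eq)
qed

lemma length_factors: "G \<noteq> [] \<Longrightarrow> length (factors G) = Suc (card (LMS_inner G))"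
proof -
  assume G: "G \<noteq> []"
  have "card (LMS G) = card {0, length G} + card (LMS_inner G)"
    unfolding LMS_eq
    by (rule card_Un_disjoint) (auto simp: finite_LMS_inner LMS_inner_def)
  also have "card {0, length G} = 2" using G by simp
  finally have "card (LMS G) = 2 + card (LMS_inner G)" .
  moreover have "finite (LMS G)"
    by (simp add: LMS_eq finite_LMS_inner)
  then have "length (lms_list G) = card (LMS G)"
    unfolding lms_list_def by simp
  ultimately show ?thesis
    unfolding factors_def Let_def by simp
qed

lemma stops_iff_LMS_inner: "stops G \<longleftrightarrow> LMS_inner G = {}"
  unfolding stops_def LMS_eq LMS_inner_def by auto

lemma stops_iff_length_factors: "stops G \<longleftrightarrow> length (factors G) \<le> 1"
proof (cases "G = []")
  case True
  then show ?thesis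
    by (simp add: stops_def LMS_eq LMS_inner_def factors_def lms_list_def)
next
  case False
  then show ?thesis
    using finite_LMS_inner by (simp add: length_factors stops_iff_LMS_inner)
qed

lemma length_gcis_string_less: "\<not> stops G \<Longrightarrow> length (gcis_string G) < length G"
proof -
  assume "\<not> stops G"
  then have "G \<noteq> []" and "LMS_inner G \<noteq> {}"
    by (auto simp: stops_iff_LMS_inner LMS_inner_def)
  moreover have "card (LMS_inner G) \<le> length G - 2"
    using card_mono[OF _ LMS_inner_subset, of G] by simp
  moreover have "2 \<le> length G"
    using LMS_inner_subset[of G] \<open>LMS_inner G \<noteq> {}\<close> by fastforce
  ultimately show ?thesis
    unfolding gcis_string_def using finite_LMS_inner[of G]
    by (simp add: length_factors card_gt_0_iff)
qed

lemma Gk_0 [simp]: "Gk T 0 = T"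
  unfolding Gk_def by simp

lemma Gk_Suc: "Gk T (Suc k) = Gk (gcis_string T) k"
  unfolding Gk_def funpow_Suc_right by simp

lemma gcis_terminates: "\<exists>k. stops (Gk T k)"
proof (induction T rule: measure_induct_rule[of length])
  case (less T)
  show ?case
  proof (cases "stops T")
    case True
    then show ?thesis by (metis Gk_0)
  next
    case False
    then obtain k where "stops (Gk (gcis_string T) k)"
      using less.IH length_gcis_string_less by blast
    then show ?thesis by (metis Gk_Suc)
  qed
qed

lemma g_is_stops: "stops T \<Longrightarrow> g_is T = length T"
  unfolding g_is_def gcis_r_def by simp

lemma gcis_r_unfold: "\<not> stops T \<Longrightarrow> gcis_r T = Suc (gcis_r (gcis_string T))"
proof -
  assume T: "\<not> stops T"
  obtain k where "stops (Gk T k)"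
    using gcis_terminates by blast
  then have "(LEAST k. stops (Gk T k)) = Suc (LEAST k. stops (Gk T (Suc k)))"
    by (rule Least_Suc) (simp add: T)
  then show ?thesis
    unfolding gcis_r_def Gk_Suc .
qed

lemma g_is_unfold: "\<not> stops T \<Longrightarrow> g_is T = Dsize T + g_is (gcis_string T)"
proof -
  assume T: "\<not> stops T"
  define r where "r = gcis_r (gcis_string T)"
  have "g_is T = (\<Sum>k<Suc r. Dsize (Gk T k)) + length (Gk T (Suc r))"
    using T unfolding g_is_def by (simp add: gcis_r_unfold r_def)
  also have "\<dots> = Dsize T + ((\<Sum>k<r. Dsize (Gk (gcis_string T) k)) + length (Gk (gcis_string T) r))"
    unfolding sum.lessThan_Suc_shift by (simp add: Gk_Suc)
  also have "(\<Sum>k<r. Dsize (Gk (gcis_string T) k)) + length (Gk (gcis_string T) r) = g_is (gcis_string T)"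
    unfolding g_is_def r_def[symmetric] Let_def by (cases "r = 0") simp_all
  finally show ?thesis .
qed

section \<open>Evaluating the parsing on periodic strings\<close>

lemma ltypes_replicate_append:
  "a \<noteq> b \<Longrightarrow> ltypes (replicate k a @ b # r) = replicate k (b < a) @ ltypes (b # r)"
proof (induction k)
  case (Suc k)
  then show ?case by (cases k) auto
qed simp

lemma ltypes_Cons_replicate_append:
  "a \<noteq> b \<Longrightarrow> ltypes (a # replicate k a @ b # r) = (b < a) # replicate k (b < a) @ ltypes (b # r)"
  using ltypes_replicate_append[of a b "Suc k" r] by simp

lemma ltypes_replicate: "ltypes (replicate k a) = replicate k True"
proof (induction k)
  case (Suc k)
  then show ?case by (cases k) auto
qed simp

lemma ltypes_Cons_less_replicate_append:
  "c < a \<Longrightarrow> c < b \<Longrightarrow> a \<noteq> b \<Longrightarrow>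
    ltypes (c # replicate k a @ b # r) = False # ltypes (replicate k a @ b # r)"
  by (cases k) auto

lemma ltypes_alternating:
  "a < b \<Longrightarrow> ltypes (concat (replicate k [a, b]) @ a # r) =
    concat (replicate k [False, True]) @ ltypes (a # r)"
proof (induction k)
  case (Suc k)
  then show ?case by (cases k) auto
qed simp

lemma ltypes_Cons_greater_alternating:
  "a < c \<Longrightarrow> ltypes (c # concat (replicate k [a, b]) @ a # r) =
    True # ltypes (concat (replicate k [a, b]) @ a # r)"
  by (cases k) auto

lemmas ltypes_patterns = ltypes_replicate_append ltypes_Cons_replicate_append ltypes_replicate
  ltypes_Cons_less_replicate_append ltypes_alternating ltypes_Cons_greater_alternating

lemma zip_alternating:
  "zip (concat (replicate k [a, b])) (concat (replicate k [s, t])) =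
    concat (replicate k [(a, s), (b, t)])"
  by (induction k) auto

lemma length_alternating [simp]: "length (concat (replicate k [a, b])) = 2 * k"
  by (induction k) auto

lemma scan_factors_replicate_append:
  "scan_factors t cur (replicate k (a, t) @ r) = scan_factors t (cur @ replicate k a) r"
  by (induction k arbitrary: cur) (auto simp: replicate_app_Cons_same)

lemma scan_factors_alternating:
  "scan_factors True [a, b] (concat (replicate k [(a, False), (b, True)]) @ r) =
    replicate k [a, b] @ scan_factors True [a, b] r"
  by (induction k) auto

lemma scan_factors_alternating_Cons:
  "cur \<noteq> [] \<Longrightarrow>
    scan_factors True cur (concat (replicate k [(a, False), (b, True)]) @ (a, False) # r) =
    cur # replicate k [a, b] @ scan_factors False [a] r"
  by (induction k arbitrary: cur) auto

lemmas scan_factors_patterns = scan_factors_replicate_append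
  scan_factors_alternating scan_factors_alternating_Cons zip_alternating replicate_app_Cons_same

lemma remdups_replicate_append [simp]:
  "remdups (replicate k x @ ys) = (if k = 0 \<or> x \<in> set ys then [] else [x]) @ remdups ys"
  by (induction k) auto

lemma remdups_replicate [simp]: "remdups (replicate k x) = (if k = 0 then [] else [x])"
  by (induction k) auto

lemma Dsize_eq: "factors G = Fs \<Longrightarrow> Dsize G = sum_list (map length (remdups Fs))"
  unfolding Dsize_def Dset_def by (simp add: sum.set_conv_list)

lemma gcis_string_eq:
  assumes "factors G = Fs" and "\<forall>x\<in>set G. x \<le> M" and "M \<in> set G"
  shows "gcis_string G = map (\<lambda>D. M + 1 + length (remdups (filter (\<lambda>D'. lex_less D' D) Fs))) Fs"
proof -
  have "Max (insert 0 (set G)) = M"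
    using assms(2,3) by (intro Max_eqI) auto
  moreover have "card {D' \<in> set Fs. lex_less D' D} = length (remdups (filter (\<lambda>D'. lex_less D' D) Fs))" for D
    by (metis length_remdups_card_conv set_filter)
  ultimately show ?thesis
    unfolding gcis_string_def nonterm_def Dset_def assms(1) by simp
qed

lemma ed_self [simp]: "ed xs xs = 0"
  by (induction xs) auto

lemma ed_eq_0_imp_eq: "ed xs ys = 0 \<Longrightarrow> xs = ys"
  by (induction xs ys rule: ed.induct) (auto split: if_splits)

lemma ed_append_left_le: "ed (u @ xs) (u @ ys) \<le> ed xs ys"
proof (induction u)
  case (Cons x u)
  have "ed (x # u @ xs) (x # u @ ys) \<le> ed (u @ xs) (u @ ys)" by simp
  then show ?case using Cons by simp
qed simp

lemma ed_substitute: "a \<noteq> b \<Longrightarrow> ed (u @ a # v) (u @ b # v) = 1"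
proof -
  assume "a \<noteq> b"
  then have "ed (u @ a # v) (u @ b # v) \<noteq> 0"
    using ed_eq_0_imp_eq by fastforce
  moreover have "ed (u @ a # v) (u @ b # v) \<le> 1"
    using ed_append_left_le[of u "a # v" "b # v"] by (simp split: if_splits)
  ultimately show ?thesis by linarith
qed

lemma ed_insert: "ed (u @ v) (u @ b # v) = 1"
proof -
  have "ed (u @ v) (u @ b # v) \<noteq> 0"
    using ed_eq_0_imp_eq by fastforce
  moreover have "ed v (b # v) \<le> 1"
    by (cases v) auto
  then have "ed (u @ v) (u @ b # v) \<le> 1"
    using ed_append_left_le[of u v "b # v"] by simp
  ultimately show ?thesis by linarith
qed

lemma ed_delete: "ed (u @ a # v) (u @ v) = 1"
proof -
  have "ed (u @ a # v) (u @ v) \<noteq> 0"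
    using ed_eq_0_imp_eq by fastforce
  moreover have "ed (a # v) v \<le> 1"
    by (cases v) auto
  then have "ed (u @ a # v) (u @ v) \<le> 1"
    using ed_append_left_le[of u "a # v" v] by simp
  ultimately show ?thesis by linarith
qed

definition max_ratio :: "nat \<Rightarrow> (nat list \<Rightarrow> nat) \<Rightarrow> nat \<Rightarrow> nat \<Rightarrow> real" where
  "max_ratio \<sigma> C n n' = Max {real (C T') / real (C T) | T T'.
      T \<in> strings \<sigma> n \<and> T' \<in> strings \<sigma> n' \<and> ed T T' = 1}"

lemma MS_sub_eq_max_ratio: "MS_sub \<sigma> C n = max_ratio \<sigma> C n n"
  unfolding MS_sub_def max_ratio_def ..

lemma MS_ins_eq_max_ratio: "MS_ins \<sigma> C n = max_ratio \<sigma> C n (n + 1)"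
  unfolding MS_ins_def max_ratio_def ..

lemma MS_del_eq_max_ratio: "MS_del \<sigma> C n = max_ratio \<sigma> C n (n - 1)"
  unfolding MS_del_def max_ratio_def ..

lemma finite_strings: "finite (strings \<sigma> n)"
  unfolding strings_def using finite_lists_length_eq[of "{1..\<sigma>}" n]
  by (simp add: conj_commute)

lemma max_ratio_ge:
  assumes "T \<in> strings \<sigma> n" and "T' \<in> strings \<sigma> n'" and "ed T T' = 1"
  shows "real (C T') / real (C T) \<le> max_ratio \<sigma> C n n'"
proof -
  have "{real (C T') / real (C T) | T T'. T \<in> strings \<sigma> n \<and> T' \<in> strings \<sigma> n' \<and> ed T T' = 1}
      \<subseteq> (\<lambda>(T, T'). real (C T') / real (C T)) ` (strings \<sigma> n \<times> strings \<sigma> n')"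
    by auto
  then have "finite {real (C T') / real (C T) | T T'.
      T \<in> strings \<sigma> n \<and> T' \<in> strings \<sigma> n' \<and> ed T T' = 1}"
    by (rule finite_subset) (simp add: finite_strings)
  then show ?thesis
    unfolding max_ratio_def using assms by (intro Max_ge) blast+
qed

lemma liminf_ge_of_minorant:
  fixes f g :: "nat \<Rightarrow> real"
  assumes "eventually (\<lambda>n. g n \<le> f n) sequentially" and "g \<longlonglongrightarrow> a"
  shows "ereal a \<le> liminf (\<lambda>n. ereal (f n))"
proof -
  have "liminf (\<lambda>n. ereal (g n)) = ereal a"
    using assms(2) by (intro lim_imp_Liminf) auto
  moreover have "liminf (\<lambda>n. ereal (g n)) \<le> liminf (\<lambda>n. ereal (f n))"
    using assms(1) by (intro Liminf_mono) (simp add: eventually_mono)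
  ultimately show ?thesis by simp
qed

lemma liminf_max_ratio_ge_4:
  assumes "\<And>n. 17 \<le> n \<Longrightarrow> \<exists>T T'. T \<in> strings \<sigma> n \<and> T' \<in> strings \<sigma> (m n) \<and> ed T T' = 1 \<and>
      4 * C T \<le> C T' + 51 \<and> n \<le> 8 * C T"
  shows "4 \<le> liminf (\<lambda>n. ereal (max_ratio \<sigma> C n (m n)))"
proof -
  have "4 - 408 / real n \<le> max_ratio \<sigma> C n (m n)" if n: "17 \<le> n" for n
  proof -
    obtain T T' where T: "T \<in> strings \<sigma> n" and T': "T' \<in> strings \<sigma> (m n)" and ed: "ed T T' = 1"
      and C': "4 * C T \<le> C T' + 51" and C: "n \<le> 8 * C T"
      using assms[OF n] by blast
    have pos: "0 < real (C T)" using n C by simp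
    have "4 - 408 / real n \<le> 4 - 51 / real (C T)"
      using n C pos by (simp add: field_simps)
    also have "\<dots> = (4 * real (C T) - 51) / real (C T)"
      using pos by (simp add: field_simps)
    also have "\<dots> \<le> real (C T') / real (C T)"
      using C' pos by (intro divide_right_mono) auto
    also have "\<dots> \<le> max_ratio \<sigma> C n (m n)"
      using T T' ed by (rule max_ratio_ge)
    finally show ?thesis .
  qed
  then have "eventually (\<lambda>n. 4 - 408 / real n \<le> max_ratio \<sigma> C n (m n)) sequentially"
    unfolding eventually_sequentially by blast
  moreover have "(\<lambda>n. 4 - 408 / real n) \<longlonglongrightarrow> 4"
    using tendsto_diff[OF tendsto_const lim_const_over_n] by simp
  ultimately show ?thesis
    using liminf_ge_of_minorant by fastforce
qed

section \<open>The witness strings\<close>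

definition stemA :: "nat \<Rightarrow> nat list" where
  "stemA k = 2 # replicate k 2"

definition blockA :: "nat \<Rightarrow> nat list" where
  "blockA k = stemA k @ [3]"

definition TA :: "nat \<Rightarrow> nat list" where
  "TA k = blockA k @ blockA k @ blockA k @ blockA k"

definition TA_sub :: "nat \<Rightarrow> nat list" where
  "TA_sub k = blockA k @ stemA k @ 1 # blockA k @ blockA k"

lemma g_is_TA: "g_is (TA k) = k + 6"
proof -
  have F0: "factors (TA k) = [blockA k, blockA k, blockA k, blockA k]"
    unfolding factors_eq_scan_factors TA_def blockA_def stemA_def
    by (simp add: ltypes_patterns scan_factors_patterns)
  have G1: "gcis_string (TA k) = [4, 4, 4, 4]"
    using gcis_string_eq[OF F0, of 3] by (simp add: TA_def blockA_def stemA_def)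
  have F1: "factors [4, 4, 4, 4 :: nat] = [[4, 4, 4, 4]]"
    by (simp add: factors_eq_scan_factors)
  show ?thesis
    using F0 G1 F1
    by (simp add: g_is_unfold g_is_stops stops_iff_length_factors Dsize_eq blockA_def stemA_def)
qed

lemma g_is_TA_sub: "g_is (TA_sub k) = 4 * k + 13"
proof -
  have F0: "factors (TA_sub k) =
      [2 # replicate k 2 @ 3 # 2 # replicate k 2, 1 # blockA k, blockA k]"
    unfolding factors_eq_scan_factors TA_sub_def blockA_def stemA_def
    by (simp add: ltypes_patterns scan_factors_patterns)
  have G1: "gcis_string (TA_sub k) = [6, 4, 5]"
    using gcis_string_eq[OF F0, of 3] by (simp add: TA_sub_def blockA_def stemA_def lex_less_Cons)
  have F1: "factors [6, 4, 5 :: nat] = [[6], [4, 5]]"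
    by (simp add: factors_eq_scan_factors)
  have G2: "gcis_string [6, 4, 5 :: nat] = [8, 7]"
    using gcis_string_eq[OF F1, of 6] by (simp add: lex_less_Cons)
  have F2: "factors [8, 7 :: nat] = [[8, 7]]"
    by (simp add: factors_eq_scan_factors)
  show ?thesis
    using F0 G1 F1 G2 F2
    by (simp add: g_is_unfold g_is_stops stops_iff_length_factors Dsize_eq blockA_def stemA_def)
qed

lemma TA_in_strings:
  "3 \<le> \<sigma> \<Longrightarrow> TA k \<in> strings \<sigma> (4 * k + 8) \<and> TA_sub k \<in> strings \<sigma> (4 * k + 8)"
  by (auto simp: strings_def TA_def TA_sub_def blockA_def stemA_def)

lemma ed_TA_TA_sub: "ed (TA k) (TA_sub k) = 1"
  using ed_substitute[of 3 1 "blockA k @ stemA k" "blockA k @ blockA k"]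
  by (simp add: TA_def TA_sub_def blockA_def)

definition stemB :: "nat \<Rightarrow> nat list" where
  "stemB k = 1 # 2 # concat (replicate k [1, 2]) @ [1]"

definition blockB :: "nat \<Rightarrow> nat list" where
  "blockB k = stemB k @ [3]"

definition TB :: "nat \<Rightarrow> nat list" where
  "TB k = blockB k @ blockB k @ blockB k @ blockB k"

definition TB_sub :: "nat \<Rightarrow> nat list" where
  "TB_sub k = blockB k @ stemB k @ 1 # blockB k @ blockB k"

definition TB_ins :: "nat \<Rightarrow> nat list" where
  "TB_ins k = blockB k @ stemB k @ 1 # 3 # blockB k @ blockB k"

definition TB_del :: "nat \<Rightarrow> nat list" where
  "TB_del k = blockB k @ stemB k @ blockB k @ blockB k"

definition pad :: "nat \<Rightarrow> nat list" where
  "pad t = 3 # replicate t 3"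

lemmas TB_defs = TB_def TB_sub_def TB_ins_def TB_del_def blockB_def stemB_def pad_def

lemma g_is_TB: "g_is (TB k) = k + 10"
proof -
  let ?B = "[1, 2] # replicate k [1, 2] @ [[1, 3 :: nat]]"
  let ?X = "4 # replicate k 4 @ [5 :: nat]"
  have F0: "factors (TB k) = ?B @ ?B @ ?B @ ?B"
    unfolding factors_eq_scan_factors TB_defs by (simp add: ltypes_patterns scan_factors_patterns)
  have G1: "gcis_string (TB k) = ?X @ ?X @ ?X @ ?X"
    using gcis_string_eq[OF F0, of 3] by (simp add: TB_defs lex_less_Cons)
  have F1: "factors (?X @ ?X @ ?X @ ?X) = [?X, ?X, ?X, ?X]"
    unfolding factors_eq_scan_factors by (simp add: ltypes_patterns scan_factors_patterns)
  have G2: "gcis_string (?X @ ?X @ ?X @ ?X) = [6, 6, 6, 6]"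
    using gcis_string_eq[OF F1, of 5] by simp
  have F2: "factors [6, 6, 6, 6 :: nat] = [[6, 6, 6, 6]]"
    by (simp add: factors_eq_scan_factors)
  show ?thesis
    using F0 G1 F1 G2 F2
    by (simp add: g_is_unfold g_is_stops stops_iff_length_factors Dsize_eq)
qed

lemma g_is_TB_ins: "g_is (TB_ins k) = 4 * k + 20"
proof -
  let ?B = "[1, 2] # replicate k [1, 2] @ [[1, 3 :: nat]]"
  let ?X = "5 # replicate k 5 @ [6 :: nat]"
  let ?G1 = "?X @ (5 # replicate k 5 @ [4]) @ ?X @ ?X"
  have F0: "factors (TB_ins k) = ?B @ ([1, 2] # replicate k [1, 2] @ [[1, 1, 3]]) @ ?B @ ?B"
    unfolding factors_eq_scan_factors TB_defs by (simp add: ltypes_patterns scan_factors_patterns)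
  have G1: "gcis_string (TB_ins k) = ?G1"
    using gcis_string_eq[OF F0, of 3] by (simp add: TB_defs lex_less_Cons)
  have F1: "factors ?G1 =
      [5 # replicate k 5 @ 6 # 5 # replicate k 5, 4 # 5 # replicate k 5 @ [6], ?X]"
    unfolding factors_eq_scan_factors by (simp add: ltypes_patterns scan_factors_patterns)
  have G2: "gcis_string ?G1 = [9, 7, 8]"
    using gcis_string_eq[OF F1, of 6] by (simp add: lex_less_Cons)
  have F2: "factors [9, 7, 8 :: nat] = [[9], [7, 8]]"
    by (simp add: factors_eq_scan_factors)
  have G3: "gcis_string [9, 7, 8 :: nat] = [11, 10]"
    using gcis_string_eq[OF F2, of 9] by (simp add: lex_less_Cons)
  have F3: "factors [11, 10 :: nat] = [[11, 10]]"
    by (simp add: factors_eq_scan_factors)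
  show ?thesis
    using F0 G1 F1 G2 F2 G3 F3
    by (simp add: g_is_unfold g_is_stops stops_iff_length_factors Dsize_eq)
qed

lemma g_is_TB_del: "g_is (TB_del k) = 4 * k + 19"
proof -
  let ?B = "[1, 2] # replicate k [1, 2] @ [[1, 3 :: nat]]"
  let ?X = "5 # replicate k 5 @ [6 :: nat]"
  let ?G1 = "?X @ (5 # replicate k 5 @ [4]) @ (replicate k 5 @ [6]) @ ?X"
  have F0: "factors (TB_del k) =
      ?B @ ([1, 2] # replicate k [1, 2] @ [[1, 1, 2]]) @ (replicate k [1, 2] @ [[1, 3]]) @ ?B"
    unfolding factors_eq_scan_factors TB_defs by (simp add: ltypes_patterns scan_factors_patterns)
  have G1: "gcis_string (TB_del k) = ?G1"
    using gcis_string_eq[OF F0, of 3] by (simp add: TB_defs lex_less_Cons)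
  have F1: "factors ?G1 =
      [5 # replicate k 5 @ 6 # 5 # replicate k 5, 4 # replicate k 5 @ [6], ?X]"
    unfolding factors_eq_scan_factors by (simp add: ltypes_patterns scan_factors_patterns)
  have G2: "gcis_string ?G1 = [9, 7, 8]"
    using gcis_string_eq[OF F1, of 6] by (simp add: lex_less_Cons)
  have F2: "factors [9, 7, 8 :: nat] = [[9], [7, 8]]"
    by (simp add: factors_eq_scan_factors)
  have G3: "gcis_string [9, 7, 8 :: nat] = [11, 10]"
    using gcis_string_eq[OF F2, of 9] by (simp add: lex_less_Cons)
  have F3: "factors [11, 10 :: nat] = [[11, 10]]"
    by (simp add: factors_eq_scan_factors)
  show ?thesis
    using F0 G1 F1 G2 F2 G3 F3
    by (simp add: g_is_unfold g_is_stops stops_iff_length_factors Dsize_eq)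
qed

lemma g_is_pad_TB: "g_is (pad t @ TB k) = k + t + 13"
proof -
  let ?B = "[1, 2] # replicate k [1, 2] @ [[1, 3 :: nat]]"
  let ?X = "4 # replicate k 4 @ [5 :: nat]"
  let ?G1 = "6 # ?X @ ?X @ ?X @ ?X"
  have F0: "factors (pad t @ TB k) = pad t # ?B @ ?B @ ?B @ ?B"
    unfolding factors_eq_scan_factors TB_defs by (simp add: ltypes_patterns scan_factors_patterns)
  have G1: "gcis_string (pad t @ TB k) = ?G1"
    using gcis_string_eq[OF F0, of 3] by (simp add: TB_defs lex_less_Cons)
  have F1: "factors ?G1 = [[6], ?X, ?X, ?X, ?X]"
    unfolding factors_eq_scan_factors by (simp add: ltypes_patterns scan_factors_patterns)
  have G2: "gcis_string ?G1 = [8, 7, 7, 7, 7]"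
    using gcis_string_eq[OF F1, of 6] by (simp add: lex_less_Cons)
  have F2: "factors [8, 7, 7, 7, 7 :: nat] = [[8, 7, 7, 7, 7]]"
    by (simp add: factors_eq_scan_factors)
  show ?thesis
    using F0 G1 F1 G2 F2
    by (simp add: g_is_unfold g_is_stops stops_iff_length_factors Dsize_eq pad_def)
qed

lemma g_is_pad_TB_sub: "g_is (pad t @ TB_sub k) = 4 * k + t + 23"
proof -
  let ?B = "[1, 2] # replicate k [1, 2] @ [[1, 3 :: nat]]"
  let ?X = "5 # replicate k 5 @ [6 :: nat]"
  let ?G1 = "7 # ?X @ (5 # replicate k 5 @ [4]) @ (replicate k 5 @ [6]) @ ?X"
  have F0: "factors (pad t @ TB_sub k) = pad t # ?B @
      ([1, 2] # replicate k [1, 2] @ [[1, 1, 1, 2]]) @ (replicate k [1, 2] @ [[1, 3]]) @ ?B"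
    unfolding factors_eq_scan_factors TB_defs by (simp add: ltypes_patterns scan_factors_patterns)
  have G1: "gcis_string (pad t @ TB_sub k) = ?G1"
    using gcis_string_eq[OF F0, of 3] by (simp add: TB_defs lex_less_Cons)
  have F1: "factors ?G1 =
      [[7], 5 # replicate k 5 @ 6 # 5 # replicate k 5, 4 # replicate k 5 @ [6], ?X]"
    unfolding factors_eq_scan_factors by (simp add: ltypes_patterns scan_factors_patterns)
  have G2: "gcis_string ?G1 = [11, 10, 8, 9]"
    using gcis_string_eq[OF F1, of 7] by (simp add: lex_less_Cons)
  have F2: "factors [11, 10, 8, 9 :: nat] = [[11, 10], [8, 9]]"
    by (simp add: factors_eq_scan_factors)
  have G3: "gcis_string [11, 10, 8, 9 :: nat] = [13, 12]"
    using gcis_string_eq[OF F2, of 11] by (simp add: lex_less_Cons)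
  have F3: "factors [13, 12 :: nat] = [[13, 12]]"
    by (simp add: factors_eq_scan_factors)
  show ?thesis
    using F0 G1 F1 G2 F2 G3 F3
    by (simp add: g_is_unfold g_is_stops stops_iff_length_factors Dsize_eq pad_def)
qed

lemma g_is_pad_TB_ins: "g_is (pad t @ TB_ins k) = 4 * k + t + 23"
proof -
  let ?B = "[1, 2] # replicate k [1, 2] @ [[1, 3 :: nat]]"
  let ?X = "5 # replicate k 5 @ [6 :: nat]"
  let ?G1 = "7 # ?X @ (5 # replicate k 5 @ [4]) @ ?X @ ?X"
  have F0: "factors (pad t @ TB_ins k) =
      pad t # ?B @ ([1, 2] # replicate k [1, 2] @ [[1, 1, 3]]) @ ?B @ ?B"
    unfolding factors_eq_scan_factors TB_defs by (simp add: ltypes_patterns scan_factors_patterns)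
  have G1: "gcis_string (pad t @ TB_ins k) = ?G1"
    using gcis_string_eq[OF F0, of 3] by (simp add: TB_defs lex_less_Cons)
  have F1: "factors ?G1 =
      [[7], 5 # replicate k 5 @ 6 # 5 # replicate k 5, 4 # 5 # replicate k 5 @ [6], ?X]"
    unfolding factors_eq_scan_factors by (simp add: ltypes_patterns scan_factors_patterns)
  have G2: "gcis_string ?G1 = [11, 10, 8, 9]"
    using gcis_string_eq[OF F1, of 7] by (simp add: lex_less_Cons)
  have F2: "factors [11, 10, 8, 9 :: nat] = [[11, 10], [8, 9]]"
    by (simp add: factors_eq_scan_factors)
  have G3: "gcis_string [11, 10, 8, 9 :: nat] = [13, 12]"
    using gcis_string_eq[OF F2, of 11] by (simp add: lex_less_Cons)
  have F3: "factors [13, 12 :: nat] = [[13, 12]]"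
    by (simp add: factors_eq_scan_factors)
  show ?thesis
    using F0 G1 F1 G2 F2 G3 F3
    by (simp add: g_is_unfold g_is_stops stops_iff_length_factors Dsize_eq pad_def)
qed

lemma g_is_pad_TB_del: "g_is (pad t @ TB_del k) = 4 * k + t + 22"
proof -
  let ?B = "[1, 2] # replicate k [1, 2] @ [[1, 3 :: nat]]"
  let ?X = "5 # replicate k 5 @ [6 :: nat]"
  let ?G1 = "7 # ?X @ (5 # replicate k 5 @ [4]) @ (replicate k 5 @ [6]) @ ?X"
  have F0: "factors (pad t @ TB_del k) = pad t # ?B @
      ([1, 2] # replicate k [1, 2] @ [[1, 1, 2]]) @ (replicate k [1, 2] @ [[1, 3]]) @ ?B"
    unfolding factors_eq_scan_factors TB_defs by (simp add: ltypes_patterns scan_factors_patterns)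
  have G1: "gcis_string (pad t @ TB_del k) = ?G1"
    using gcis_string_eq[OF F0, of 3] by (simp add: TB_defs lex_less_Cons)
  have F1: "factors ?G1 =
      [[7], 5 # replicate k 5 @ 6 # 5 # replicate k 5, 4 # replicate k 5 @ [6], ?X]"
    unfolding factors_eq_scan_factors by (simp add: ltypes_patterns scan_factors_patterns)
  have G2: "gcis_string ?G1 = [11, 10, 8, 9]"
    using gcis_string_eq[OF F1, of 7] by (simp add: lex_less_Cons)
  have F2: "factors [11, 10, 8, 9 :: nat] = [[11, 10], [8, 9]]"
    by (simp add: factors_eq_scan_factors)
  have G3: "gcis_string [11, 10, 8, 9 :: nat] = [13, 12]"
    using gcis_string_eq[OF F2, of 11] by (simp add: lex_less_Cons)
  have F3: "factors [13, 12 :: nat] = [[13, 12]]"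
    by (simp add: factors_eq_scan_factors)
  show ?thesis
    using F0 G1 F1 G2 F2 G3 F3
    by (simp add: g_is_unfold g_is_stops stops_iff_length_factors Dsize_eq pad_def)
qed

lemma TB_in_strings:
  "3 \<le> \<sigma> \<Longrightarrow> TB k \<in> strings \<sigma> (8 * k + 16) \<and>
    TB_ins k \<in> strings \<sigma> (8 * k + 17) \<and> TB_del k \<in> strings \<sigma> (8 * k + 15)"
  by (auto simp: strings_def TB_defs)

lemma pad_TB_in_strings:
  "3 \<le> \<sigma> \<Longrightarrow>
    pad t @ TB k \<in> strings \<sigma> (t + 8 * k + 17) \<and> pad t @ TB_sub k \<in> strings \<sigma> (t + 8 * k + 17) \<and>
    pad t @ TB_ins k \<in> strings \<sigma> (t + 8 * k + 17 + 1) \<and>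
    pad t @ TB_del k \<in> strings \<sigma> (t + 8 * k + 17 - 1)"
  by (auto simp: strings_def TB_defs)

lemma ed_TB_TB_sub: "ed (u @ TB k) (u @ TB_sub k) = 1"
  using ed_substitute[of 3 1 "u @ blockB k @ stemB k" "blockB k @ blockB k"]
  by (simp add: TB_def TB_sub_def blockB_def)

lemma ed_TB_TB_ins: "ed (u @ TB k) (u @ TB_ins k) = 1"
  using ed_insert[of "u @ blockB k @ stemB k" "3 # blockB k @ blockB k" 1]
  by (simp add: TB_def TB_ins_def blockB_def)

lemma ed_TB_TB_del: "ed (u @ TB k) (u @ TB_del k) = 1"
  using ed_delete[of "u @ blockB k @ stemB k" 3 "blockB k @ blockB k"]
  by (simp add: TB_def TB_del_def blockB_def)

section \<open>The sensitivity bounds\<close>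

lemma AS_sub_g_is:
  assumes "3 \<le> \<sigma>"
  shows "\<exists>c>0. \<forall>N. \<exists>T T'. T \<in> strings \<sigma> (length T) \<and> T' \<in> strings \<sigma> (length T) \<and>
    ed T T' = 1 \<and> N \<le> g_is T \<and> c * real (length T) \<le> real (g_is T) \<and>
    int (g_is T') - int (g_is T) \<ge> 3 * int (g_is T) - 13"
proof (intro exI[of _ "1/8"] conjI allI exI)
  fix N
  show "TA N \<in> strings \<sigma> (length (TA N))" "TA_sub N \<in> strings \<sigma> (length (TA N))"
    using TA_in_strings[OF assms, of N] by (auto simp: strings_def)
  show "ed (TA N) (TA_sub N) = 1"
    by (rule ed_TA_TA_sub)
  show "N \<le> g_is (TA N)" "1/8 * real (length (TA N)) \<le> real (g_is (TA N))"
    "int (g_is (TA_sub N)) - int (g_is (TA N)) \<ge> 3 * int (g_is (TA N)) - 13"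
    using TA_in_strings[OF assms, of N] by (auto simp: strings_def g_is_TA g_is_TA_sub)
qed simp

lemma AS_ins_g_is:
  assumes "3 \<le> \<sigma>"
  shows "\<exists>c>0. \<forall>N. \<exists>T T'. T \<in> strings \<sigma> (length T) \<and> T' \<in> strings \<sigma> (length T + 1) \<and>
    ed T T' = 1 \<and> N \<le> g_is T \<and> c * real (length T) \<le> real (g_is T) \<and>
    int (g_is T') - int (g_is T) \<ge> 3 * int (g_is T) - 24"
proof (intro exI[of _ "1/8"] conjI allI exI)
  fix N
  show "TB N \<in> strings \<sigma> (length (TB N))" "TB_ins N \<in> strings \<sigma> (length (TB N) + 1)"
    using TB_in_strings[OF assms, of N] by (auto simp: strings_def)
  show "ed (TB N) (TB_ins N) = 1"
    using ed_TB_TB_ins[of "[]"] by simp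
  show "N \<le> g_is (TB N)" "1/8 * real (length (TB N)) \<le> real (g_is (TB N))"
    "int (g_is (TB_ins N)) - int (g_is (TB N)) \<ge> 3 * int (g_is (TB N)) - 24"
    using TB_in_strings[OF assms, of N] by (auto simp: strings_def g_is_TB g_is_TB_ins)
qed simp

lemma AS_del_g_is:
  assumes "3 \<le> \<sigma>"
  shows "\<exists>c>0. \<forall>N. \<exists>T T'. T \<in> strings \<sigma> (length T) \<and> T' \<in> strings \<sigma> (length T - 1) \<and>
    ed T T' = 1 \<and> N \<le> g_is T \<and> c * real (length T) \<le> real (g_is T) \<and>
    int (g_is T') - int (g_is T) \<ge> 3 * int (g_is T) - 29"
proof (intro exI[of _ "1/8"] conjI allI exI)
  fix N
  show "TB N \<in> strings \<sigma> (length (TB N))" "TB_del N \<in> strings \<sigma> (length (TB N) - 1)"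
    using TB_in_strings[OF assms, of N] by (auto simp: strings_def)
  show "ed (TB N) (TB_del N) = 1"
    using ed_TB_TB_del[of "[]"] by simp
  show "N \<le> g_is (TB N)" "1/8 * real (length (TB N)) \<le> real (g_is (TB N))"
    "int (g_is (TB_del N)) - int (g_is (TB N)) \<ge> 3 * int (g_is (TB N)) - 29"
    using TB_in_strings[OF assms, of N] by (auto simp: strings_def g_is_TB g_is_TB_del)
qed simp

lemma ge_17_decompose_8: "17 \<le> (n :: nat) \<Longrightarrow> \<exists>t k. t < 8 \<and> n = t + 8 * k + 17"
  by (intro exI[of _ "(n - 17) mod 8"] exI[of _ "(n - 17) div 8"]) auto

lemma liminf_MS_sub_g_is:
  assumes "3 \<le> \<sigma>"
  shows "4 \<le> liminf (\<lambda>n. ereal (MS_sub \<sigma> g_is n))"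
  unfolding MS_sub_eq_max_ratio
proof (rule liminf_max_ratio_ge_4)
  fix n :: nat
  assume "17 \<le> n"
  then obtain t k where "t < 8" and n: "n = t + 8 * k + 17"
    using ge_17_decompose_8 by blast
  then show "\<exists>T T'. T \<in> strings \<sigma> n \<and> T' \<in> strings \<sigma> n \<and> ed T T' = 1 \<and>
      4 * g_is T \<le> g_is T' + 51 \<and> n \<le> 8 * g_is T"
    unfolding n using pad_TB_in_strings[OF assms, of t k] ed_TB_TB_sub[of "pad t" k]
    by (intro exI[of _ "pad t @ TB k"] exI[of _ "pad t @ TB_sub k"])
      (simp add: g_is_pad_TB g_is_pad_TB_sub)
qed

lemma liminf_MS_ins_g_is:
  assumes "3 \<le> \<sigma>"
  shows "4 \<le> liminf (\<lambda>n. ereal (MS_ins \<sigma> g_is n))"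
  unfolding MS_ins_eq_max_ratio
proof (rule liminf_max_ratio_ge_4)
  fix n :: nat
  assume "17 \<le> n"
  then obtain t k where "t < 8" and n: "n = t + 8 * k + 17"
    using ge_17_decompose_8 by blast
  then show "\<exists>T T'. T \<in> strings \<sigma> n \<and> T' \<in> strings \<sigma> (n + 1) \<and> ed T T' = 1 \<and>
      4 * g_is T \<le> g_is T' + 51 \<and> n \<le> 8 * g_is T"
    unfolding n using pad_TB_in_strings[OF assms, of t k] ed_TB_TB_ins[of "pad t" k]
    by (intro exI[of _ "pad t @ TB k"] exI[of _ "pad t @ TB_ins k"])
      (simp add: g_is_pad_TB g_is_pad_TB_ins)
qed

lemma liminf_MS_del_g_is:
  assumes "3 \<le> \<sigma>"
  shows "4 \<le> liminf (\<lambda>n. ereal (MS_del \<sigma> g_is n))"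
  unfolding MS_del_eq_max_ratio
proof (rule liminf_max_ratio_ge_4)
  fix n :: nat
  assume "17 \<le> n"
  then obtain t k where "t < 8" and n: "n = t + 8 * k + 17"
    using ge_17_decompose_8 by blast
  then show "\<exists>T T'. T \<in> strings \<sigma> n \<and> T' \<in> strings \<sigma> (n - 1) \<and> ed T T' = 1 \<and>
      4 * g_is T \<le> g_is T' + 51 \<and> n \<le> 8 * g_is T"
    unfolding n using pad_TB_in_strings[OF assms, of t k] ed_TB_TB_del[of "pad t" k]
    by (intro exI[of _ "pad t @ TB k"] exI[of _ "pad t @ TB_del k"])
      (simp add: g_is_pad_TB g_is_pad_TB_del)
qed

theorem mainTheorem20:
  shows "\<exists>\<sigma>0. \<forall>\<sigma>\<ge>\<sigma>0.
    liminf (\<lambda>n. ereal (MS_sub \<sigma> g_is n)) \<ge> 4 \<and>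
    liminf (\<lambda>n. ereal (MS_ins \<sigma> g_is n)) \<ge> 4 \<and>
    liminf (\<lambda>n. ereal (MS_del \<sigma> g_is n)) \<ge> 4 \<and>
    (\<exists>c>0. \<forall>N. \<exists>T T'. T \<in> strings \<sigma> (length T) \<and> T' \<in> strings \<sigma> (length T) \<and>
        ed T T' = 1 \<and> N \<le> g_is T \<and> c * real (length T) \<le> real (g_is T) \<and>
        int (g_is T') - int (g_is T) \<ge> 3 * int (g_is T) - 13) \<and>
    (\<exists>c>0. \<forall>N. \<exists>T T'. T \<in> strings \<sigma> (length T) \<and> T' \<in> strings \<sigma> (length T + 1) \<and>
        ed T T' = 1 \<and> N \<le> g_is T \<and> c * real (length T) \<le> real (g_is T) \<and>
        int (g_is T') - int (g_is T) \<ge> 3 * int (g_is T) - 24) \<and>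
    (\<exists>c>0. \<forall>N. \<exists>T T'. T \<in> strings \<sigma> (length T) \<and> T' \<in> strings \<sigma> (length T - 1) \<and>
        ed T T' = 1 \<and> N \<le> g_is T \<and> c * real (length T) \<le> real (g_is T) \<and>
        int (g_is T') - int (g_is T) \<ge> 3 * int (g_is T) - 29)"
  using liminf_MS_sub_g_is liminf_MS_ins_g_is liminf_MS_del_g_is AS_sub_g_is AS_ins_g_is AS_del_g_is
  by blast

end
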